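(* Let $n\ge 3$ and $\varphi$ a linear functional with $\varphi(e_i)=a_i$, $0<a_1<\dots<a_n$. Every $\varphi$-monotone path on $\diamond^n$ is at distance at most $n-2$ in the flip graph from some coherent monotone path, and this bound is attained (e.g. by the path with vertices $-e_n,-e_{n-1},\dots,-e_1,e_2,\dots,e_{n-1},e_n$).
   Context: $\diamond^n=\mathrm{conv}\{\pm e_1,\dots,\pm e_n\}$. A monotone path is a sequence of vertices $-e_n=v_0,\dots,v_m=e_n$ with $v_{j-1}\neq -v_j$ and $\varphi(v_{j-1})<\varphi(v_j)$. The flip graph has the monotone paths as vertices, two being adjacent when one is obtained from the other by inserting or deleting a single vertex. A monotone path is coherent if there is a linear functional $\psi$ such that for $\pi=(\varphi,\psi):\mathbb{R}^n\to\mathbb{R}^2$ the images $\pi(v_0),\dots,\pi(v_m)$ are exactly the lower vertices of the polygon $\pi(\diamond^n)$ in order and each edge $[v_{j-1},v_j]$ is the preimage in $\diamond^n$ of a lower edge; for $\diamond^n$ this holds exactly when the path contains no antipodal pair other than $\{-e_n,e_n\}$. *)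

theory Defs
  imports "HOL-Analysis.Analysis"
begin

text \<open>Points of R^n are represented as coefficient functions nat => real; only the
coordinates 1..n are used (the vertices below are supported in {1..n}).\<close>

definition unitv :: "nat \<Rightarrow> (nat \<Rightarrow> real)" where
  "unitv i = (\<lambda>j. if j = i then 1 else 0)"

definition negv :: "(nat \<Rightarrow> real) \<Rightarrow> (nat \<Rightarrow> real)" where
  "negv v = (\<lambda>j. - v j)"

definition cross_vertices :: "nat \<Rightarrow> (nat \<Rightarrow> real) set" where
  "cross_vertices n = {unitv i | i. 1 \<le> i \<and> i \<le> n} \<union> {negv (unitv i) | i. 1 \<le> i \<and> i \<le> n}"

definition fconv :: "(nat \<Rightarrow> real) set \<Rightarrow> (nat \<Rightarrow> real) set" where
  "fconv V = {(\<lambda>j. \<Sum>v\<in>V. \<mu> v * v j) | \<mu>. (\<forall>v\<in>V. 0 \<le> \<mu> v) \<and> (\<Sum>v\<in>V. \<mu> v) = 1}"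

definition cross :: "nat \<Rightarrow> (nat \<Rightarrow> real) set" where
  "cross n = fconv (cross_vertices n)"

definition fseg :: "(nat \<Rightarrow> real) \<Rightarrow> (nat \<Rightarrow> real) \<Rightarrow> (nat \<Rightarrow> real) set" where
  "fseg u w = {(\<lambda>j. (1 - t) * u j + t * w j) | t. 0 \<le> t \<and> t \<le> 1}"

definition lfun :: "nat \<Rightarrow> (nat \<Rightarrow> real) \<Rightarrow> (nat \<Rightarrow> real) \<Rightarrow> real" where
  "lfun n c x = (\<Sum>i=1..n. c i * x i)"

definition monotone_path :: "nat \<Rightarrow> (nat \<Rightarrow> real) \<Rightarrow> (nat \<Rightarrow> real) list \<Rightarrow> bool" where
  "monotone_path n a vs \<longleftrightarrow>
     vs \<noteq> [] \<and> hd vs = negv (unitv n) \<and> last vs = unitv n \<and>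
     set vs \<subseteq> cross_vertices n \<and>
     (\<forall>j. j + 1 < length vs \<longrightarrow>
        vs ! j \<noteq> negv (vs ! (j + 1)) \<and> lfun n a (vs ! j) < lfun n a (vs ! (j + 1)))"

definition lower_point :: "(real \<times> real) set \<Rightarrow> real \<times> real \<Rightarrow> bool" where
  "lower_point Q p \<longleftrightarrow> p \<in> Q \<and> (\<forall>q\<in>Q. fst q = fst p \<longrightarrow> snd p \<le> snd q)"

definition lower_vertex :: "(real \<times> real) set \<Rightarrow> real \<times> real \<Rightarrow> bool" where
  "lower_vertex Q p \<longleftrightarrow> {p} face_of Q \<and> lower_point Q p"

definition lower_edge :: "(real \<times> real) set \<Rightarrow> (real \<times> real) set \<Rightarrow> bool" where
  "lower_edge Q E \<longleftrightarrow> E face_of Q \<and> aff_dim E = 1 \<and> (\<forall>p\<in>E. lower_point Q p)"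

definition coherent_path :: "nat \<Rightarrow> (nat \<Rightarrow> real) \<Rightarrow> (nat \<Rightarrow> real) list \<Rightarrow> bool" where
  "coherent_path n a vs \<longleftrightarrow> monotone_path n a vs \<and>
     (\<exists>b :: nat \<Rightarrow> real.
        let \<pi> = (\<lambda>x. (lfun n a x, lfun n b x)); Q = \<pi> ` cross n in
        set (map \<pi> vs) = {p. lower_vertex Q p} \<and>
        sorted_wrt (\<lambda>p q. fst p < fst q) (map \<pi> vs) \<and>
        (\<forall>j. j + 1 < length vs \<longrightarrow>
           (\<exists>E. lower_edge Q E \<and> fseg (vs ! j) (vs ! (j + 1)) = {x \<in> cross n. \<pi> x \<in> E})))"

definition flip_rel :: "nat \<Rightarrow> (nat \<Rightarrow> real) \<Rightarrow> ((nat \<Rightarrow> real) list \<times> (nat \<Rightarrow> real) list) set" where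
  "flip_rel n a = {(p, q). monotone_path n a p \<and> monotone_path n a q \<and>
      ((\<exists>i x. q = take i p @ x # drop i p) \<or> (\<exists>i x. p = take i q @ x # drop i q))}"

definition extremal_path :: "nat \<Rightarrow> (nat \<Rightarrow> real) list" where
  "extremal_path n = map (\<lambda>i. negv (unitv i)) (rev [1..<n+1]) @ map unitv [2..<n+1]"

end

theory Submission
  imports Defs
begin

text \<open>A flip inserts or deletes a single vertex, so it changes the number of antipodal pairs
  \<open>e\<^sub>i, -e\<^sub>i\<close> (\<open>i < n\<close>) of a path by at most one. A monotone path cannot contain both
  \<open>e\<^sub>1\<close> and \<open>-e\<^sub>1\<close>, so it has at most \<open>n - 2\<close> pairs, and the extremal path has exactly
  \<open>n - 2\<close>. Deleting \<open>-e\<^sub>i\<close> from a pair keeps a path monotone, and a path is coherent iff it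
  has no pair: lifting its vertices to the parabola \<open>y = x\<^sup>2 - a\<^sub>n\<^sup>2\<close> and all other
  vertices to height at least \<open>0\<close> makes it the lower boundary of the projection, whereas if
  \<open>e\<^sub>i\<close> and \<open>-e\<^sub>i\<close> were both lower vertices, central symmetry would put both on the segment
  joining the images of \<open>-e\<^sub>n\<close> and \<open>e\<^sub>n\<close>.\<close>

section \<open>The cross-polytope\<close>

lemma unitv_eq_iff [simp]: "unitv i = unitv j \<longleftrightarrow> i = j"
  by (metis unitv_def zero_neq_one)

lemma negv_negv [simp]: "negv (negv u) = u"
  by (simp add: negv_def)

lemma negv_eq_iff [simp]: "negv u = negv w \<longleftrightarrow> u = w"
  by (metis negv_negv)

lemma unitv_neq_negv [simp]: "unitv i \<noteq> negv (unitv j)" "negv (unitv j) \<noteq> unitv i"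
  by (metis negv_def unitv_def neg_equal_zero zero_neq_one neg_0_equal_iff_equal)+

lemma lfun_unitv: "1 \<le> i \<Longrightarrow> i \<le> n \<Longrightarrow> lfun n c (unitv i) = c i"
  by (simp add: lfun_def unitv_def if_distrib cong: if_cong)

lemma lfun_negv: "lfun n c (negv v) = - lfun n c v"
  by (simp add: lfun_def negv_def sum_negf)

lemma lfun_affine: "lfun n c (\<lambda>j. r * u j + s * w j) = r * lfun n c u + s * lfun n c w"
  by (simp add: lfun_def algebra_simps sum.distrib sum_distrib_left)

lemma lfun_convex_sum: "lfun n c (\<lambda>j. \<Sum>v\<in>V. \<mu> v * v j) = (\<Sum>v\<in>V. \<mu> v * lfun n c v)"
proof -
  have "(\<Sum>i=1..n. c i * (\<Sum>v\<in>V. \<mu> v * v i)) = (\<Sum>i=1..n. \<Sum>v\<in>V. \<mu> v * (c i * v i))"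
    by (simp add: sum_distrib_left mult.left_commute)
  also have "\<dots> = (\<Sum>v\<in>V. \<mu> v * (\<Sum>i=1..n. c i * v i))"
    by (subst sum.swap) (simp add: sum_distrib_left)
  finally show ?thesis
    unfolding lfun_def .
qed

lemma finite_cross_vertices [simp]: "finite (cross_vertices n)"
  by (simp add: cross_vertices_def)

lemma cross_vertices_cases:
  assumes "v \<in> cross_vertices n"
  obtains i where "1 \<le> i" "i \<le> n" "v = unitv i" | i where "1 \<le> i" "i \<le> n" "v = negv (unitv i)"
  using assms unfolding cross_vertices_def by blast

lemma crossE:
  assumes "x \<in> cross n"
  obtains \<mu> where "\<forall>v\<in>cross_vertices n. 0 \<le> \<mu> v" "(\<Sum>v\<in>cross_vertices n. \<mu> v) = 1"
    "x = (\<lambda>j. \<Sum>v\<in>cross_vertices n. \<mu> v * v j)"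
  using assms unfolding cross_def fconv_def by blast

lemma cross_vertex_in_cross:
  assumes "u \<in> cross_vertices n"
  shows "u \<in> cross n"
proof -
  let ?\<mu> = "\<lambda>v. if v = u then 1 else 0 :: real"
  have "?\<mu> v * v j = (if v = u then u j else 0)" for v j
    by simp
  then have "(\<lambda>j. \<Sum>v\<in>cross_vertices n. ?\<mu> v * v j) = u"
    using assms by simp
  moreover have "(\<Sum>v\<in>cross_vertices n. ?\<mu> v) = 1"
    using assms by simp
  ultimately show ?thesis
    unfolding cross_def fconv_def by (auto intro!: exI[of _ ?\<mu>])
qed

lemma cross_affine_comb:
  assumes "x \<in> cross n" "y \<in> cross n" "0 \<le> r" "r \<le> 1"
  shows "(\<lambda>j. (1 - r) * x j + r * y j) \<in> cross n"
proof -
  obtain \<mu> where \<mu>: "\<forall>v\<in>cross_vertices n. 0 \<le> \<mu> v" "(\<Sum>v\<in>cross_vertices n. \<mu> v) = 1"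
    "x = (\<lambda>j. \<Sum>v\<in>cross_vertices n. \<mu> v * v j)"
    using assms(1) by (rule crossE)
  obtain \<nu> where \<nu>: "\<forall>v\<in>cross_vertices n. 0 \<le> \<nu> v" "(\<Sum>v\<in>cross_vertices n. \<nu> v) = 1"
    "y = (\<lambda>j. \<Sum>v\<in>cross_vertices n. \<nu> v * v j)"
    using assms(2) by (rule crossE)
  define \<rho> where "\<rho> v = (1 - r) * \<mu> v + r * \<nu> v" for v
  have "(\<lambda>j. (1 - r) * x j + r * y j) = (\<lambda>j. \<Sum>v\<in>cross_vertices n. \<rho> v * v j)"
    by (simp add: \<mu>(3) \<nu>(3) \<rho>_def sum.distrib sum_distrib_left distrib_right mult.assoc)
  moreover have "\<forall>v\<in>cross_vertices n. 0 \<le> \<rho> v"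
    using \<mu>(1) \<nu>(1) assms(3,4) by (simp add: \<rho>_def)
  moreover have "(\<Sum>v\<in>cross_vertices n. \<rho> v) = 1"
    using \<mu>(2) \<nu>(2) by (simp add: \<rho>_def sum.distrib flip: sum_distrib_left)
  ultimately show ?thesis
    unfolding cross_def fconv_def by blast
qed

lemma fseg_subset_cross:
  assumes "u \<in> cross_vertices n" "w \<in> cross_vertices n"
  shows "fseg u w \<subseteq> cross n"
  using cross_affine_comb[OF cross_vertex_in_cross[OF assms(1)] cross_vertex_in_cross[OF assms(2)]]
  by (auto simp: fseg_def)

lemma convex_combination_in_fseg:
  assumes "finite V" "u \<in> V" "w \<in> V" "\<forall>v\<in>V. 0 \<le> \<mu> v" "(\<Sum>v\<in>V. \<mu> v) = 1"
    and vanish: "\<And>v. v \<in> V \<Longrightarrow> v \<noteq> u \<Longrightarrow> v \<noteq> w \<Longrightarrow> \<mu> v = 0"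
  shows "(\<lambda>j. \<Sum>v\<in>V. \<mu> v * v j) \<in> fseg u w"
proof -
  have on_uw: "(\<Sum>v\<in>V. \<mu> v * h v) = (\<Sum>v\<in>{u, w}. \<mu> v * h v)" for h :: "_ \<Rightarrow> real"
    using assms by (intro sum.mono_neutral_right) auto
  show ?thesis
  proof (cases "u = w")
    case True
    then have "\<mu> u = 1"
      using on_uw[of "\<lambda>_. 1"] assms(5) by simp
    then have "(\<lambda>j. \<Sum>v\<in>V. \<mu> v * v j) = (\<lambda>j. (1 - 0) * u j + 0 * w j)"
      using on_uw True by simp
    then show ?thesis
      unfolding fseg_def by fastforce
  next
    case False
    then have "\<mu> u = 1 - \<mu> w"
      using on_uw[of "\<lambda>_. 1"] assms(5) by simp
    moreover have "0 \<le> \<mu> w" "\<mu> w \<le> 1"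
      using assms(2-4) \<open>\<mu> u = 1 - \<mu> w\<close> by force+
    ultimately show ?thesis
      unfolding fseg_def using on_uw False by (auto intro!: exI[of _ "\<mu> w"])
  qed
qed

lemma abs_lfun_cross_le:
  assumes "x \<in> cross n" and bound: "\<And>v. v \<in> cross_vertices n \<Longrightarrow> \<bar>lfun n c v\<bar> \<le> M"
  shows "\<bar>lfun n c x\<bar> \<le> M"
proof -
  obtain \<mu> where \<mu>: "\<forall>v\<in>cross_vertices n. 0 \<le> \<mu> v" "(\<Sum>v\<in>cross_vertices n. \<mu> v) = 1"
    "x = (\<lambda>j. \<Sum>v\<in>cross_vertices n. \<mu> v * v j)"
    using assms(1) by (rule crossE)
  have "\<bar>lfun n c x\<bar> \<le> (\<Sum>v\<in>cross_vertices n. \<bar>\<mu> v * lfun n c v\<bar>)"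
    unfolding \<mu>(3) lfun_convex_sum by (rule sum_abs)
  also have "\<dots> \<le> (\<Sum>v\<in>cross_vertices n. \<mu> v * M)"
    using \<mu>(1) bound by (intro sum_mono) (simp add: abs_mult mult_left_mono)
  also have "\<dots> = M"
    using \<mu>(2) by (simp flip: sum_distrib_right)
  finally show ?thesis .
qed

section \<open>Projections to the plane\<close>

definition plane_proj :: "nat \<Rightarrow> (nat \<Rightarrow> real) \<Rightarrow> (nat \<Rightarrow> real) \<Rightarrow> (nat \<Rightarrow> real) \<Rightarrow> real \<times> real"
  where "plane_proj n a b x = (lfun n a x, lfun n b x)"

lemma coherent_path_iff:
  "coherent_path n a vs \<longleftrightarrow> monotone_path n a vs \<and> (\<exists>b.
     set (map (plane_proj n a b) vs) = {p. lower_vertex (plane_proj n a b ` cross n) p} \<and>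
     sorted_wrt (\<lambda>p q. fst p < fst q) (map (plane_proj n a b) vs) \<and>
     (\<forall>j. j + 1 < length vs \<longrightarrow> (\<exists>E. lower_edge (plane_proj n a b ` cross n) E \<and>
        fseg (vs ! j) (vs ! (j + 1)) = {x \<in> cross n. plane_proj n a b x \<in> E})))"
  by (simp add: coherent_path_def Let_def plane_proj_def[abs_def])

lemma plane_proj_affine:
  "plane_proj n a b (\<lambda>j. (1 - r) * u j + r * w j)
     = (1 - r) *\<^sub>R plane_proj n a b u + r *\<^sub>R plane_proj n a b w"
  by (simp add: plane_proj_def lfun_affine)

lemma convex_plane_proj_cross: "convex (plane_proj n a b ` cross n)"
proof (unfold convex_alt, intro ballI allI impI)
  fix z1 z2 and r :: real
  assume "z1 \<in> plane_proj n a b ` cross n" "z2 \<in> plane_proj n a b ` cross n" "0 \<le> r \<and> r \<le> 1"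
  then obtain x y where xy: "x \<in> cross n" "y \<in> cross n"
    and z: "z1 = plane_proj n a b x" "z2 = plane_proj n a b y" and r: "0 \<le> r" "r \<le> 1"
    by blast
  have "(1 - r) *\<^sub>R z1 + r *\<^sub>R z2 = plane_proj n a b (\<lambda>j. (1 - r) * x j + r * y j)"
    by (simp only: z plane_proj_affine)
  then show "(1 - r) *\<^sub>R z1 + r *\<^sub>R z2 \<in> plane_proj n a b ` cross n"
    using cross_affine_comb[OF xy r] by blast
qed

lemma plane_proj_fseg:
  "plane_proj n a b ` fseg u w = closed_segment (plane_proj n a b u) (plane_proj n a b w)"
proof (intro equalityI subsetI)
  fix z assume "z \<in> plane_proj n a b ` fseg u w"
  then obtain r where "0 \<le> r" "r \<le> 1" "z = plane_proj n a b (\<lambda>j. (1 - r) * u j + r * w j)"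
    unfolding fseg_def by blast
  then show "z \<in> closed_segment (plane_proj n a b u) (plane_proj n a b w)"
    unfolding closed_segment_def plane_proj_affine by blast
next
  fix z assume "z \<in> closed_segment (plane_proj n a b u) (plane_proj n a b w)"
  then obtain r where r: "0 \<le> r" "r \<le> 1"
    and "z = (1 - r) *\<^sub>R plane_proj n a b u + r *\<^sub>R plane_proj n a b w"
    unfolding closed_segment_def by blast
  then have "z = plane_proj n a b (\<lambda>j. (1 - r) * u j + r * w j)"
    by (simp only: plane_proj_affine)
  moreover have "(\<lambda>j. (1 - r) * u j + r * w j) \<in> fseg u w"
    unfolding fseg_def using r by blast
  ultimately show "z \<in> plane_proj n a b ` fseg u w"
    by blast
qed

lemma face_singleton_on_segment:
  assumes "{p} face_of S" "x \<in> S" "y \<in> S" "p \<in> closed_segment x y"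
  shows "p = x \<or> p = y"
  using assms unfolding face_of_def open_segment_def by blast

lemma lower_point_in_segment_on_line:
  fixes x y p :: "real \<times> real"
  assumes above: "\<forall>z\<in>Q. m * fst z + k \<le> snd z"
    and seg: "closed_segment x y \<subseteq> Q"
    and x_on: "snd x = m * fst x + k" and y_on: "snd y = m * fst y + k"
    and between: "fst x < fst y" "fst x \<le> fst p" "fst p \<le> fst y"
    and lower: "lower_point Q p"
  shows "p \<in> closed_segment x y"
proof -
  define r where "r = (fst p - fst x) / (fst y - fst x)"
  have r: "0 \<le> r" "r \<le> 1"
    using between by (simp_all add: r_def divide_simps)
  define z where "z = (1 - r) *\<^sub>R x + r *\<^sub>R y"
  have z_seg: "z \<in> closed_segment x y"
    using r unfolding z_def closed_segment_def by blast
  have "fst z = fst x + r * (fst y - fst x)"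
    by (simp add: z_def algebra_simps)
  then have fst_z: "fst z = fst p"
    using between by (simp add: r_def)
  have "snd z = m * fst z + k"
    by (simp add: z_def x_on y_on algebra_simps)
  then have "snd z \<le> snd p"
    using above lower fst_z by (auto simp: lower_point_def)
  moreover have "snd p \<le> snd z"
    using lower z_seg seg fst_z unfolding lower_point_def by auto
  ultimately have "p = z"
    using fst_z by (simp add: prod_eq_iff)
  then show ?thesis
    using z_seg by simp
qed

lemma plane_proj_height_above_line:
  assumes "x \<in> cross n"
  obtains \<mu> where "\<forall>v\<in>cross_vertices n. 0 \<le> \<mu> v" "(\<Sum>v\<in>cross_vertices n. \<mu> v) = 1"
    "x = (\<lambda>j. \<Sum>v\<in>cross_vertices n. \<mu> v * v j)"
    "snd (plane_proj n a b x) - m * fst (plane_proj n a b x) - k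
       = (\<Sum>v\<in>cross_vertices n. \<mu> v * (lfun n b v - m * lfun n a v - k))"
proof -
  obtain \<mu> where \<mu>: "\<forall>v\<in>cross_vertices n. 0 \<le> \<mu> v" "(\<Sum>v\<in>cross_vertices n. \<mu> v) = 1"
    "x = (\<lambda>j. \<Sum>v\<in>cross_vertices n. \<mu> v * v j)"
    using assms by (rule crossE)
  have "(\<Sum>v\<in>cross_vertices n. \<mu> v * (lfun n b v - m * lfun n a v - k))
      = (\<Sum>v\<in>cross_vertices n. \<mu> v * lfun n b v) - m * (\<Sum>v\<in>cross_vertices n. \<mu> v * lfun n a v)
        - k * (\<Sum>v\<in>cross_vertices n. \<mu> v)"
    by (simp add: algebra_simps sum_subtractf sum.distrib sum_distrib_left)
  then show ?thesis
    using that \<mu> by (simp add: plane_proj_def lfun_convex_sum)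
qed

lemma plane_proj_cross_above_line:
  assumes above: "\<And>v. v \<in> cross_vertices n \<Longrightarrow> m * lfun n a v + k \<le> lfun n b v"
    and z: "z \<in> plane_proj n a b ` cross n"
  shows "m * fst z + k \<le> snd z"
proof -
  obtain x where x: "x \<in> cross n" "z = plane_proj n a b x"
    using z by blast
  obtain \<mu> where \<mu>: "\<forall>v\<in>cross_vertices n. 0 \<le> \<mu> v" "(\<Sum>v\<in>cross_vertices n. \<mu> v) = 1"
    "x = (\<lambda>j. \<Sum>v\<in>cross_vertices n. \<mu> v * v j)"
    "snd (plane_proj n a b x) - m * fst (plane_proj n a b x) - k
       = (\<Sum>v\<in>cross_vertices n. \<mu> v * (lfun n b v - m * lfun n a v - k))"
    by (rule plane_proj_height_above_line[OF x(1)])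
  have "0 \<le> \<mu> v * (lfun n b v - m * lfun n a v - k)" if "v \<in> cross_vertices n" for v
    using that \<mu>(1) above[OF that] by simp
  then have "0 \<le> (\<Sum>v\<in>cross_vertices n. \<mu> v * (lfun n b v - m * lfun n a v - k))"
    by (rule sum_nonneg)
  then show ?thesis
    using \<mu>(4) x(2) by simp
qed

lemma plane_proj_cross_line_preimage:
  assumes above: "\<And>v. v \<in> cross_vertices n \<Longrightarrow> m * lfun n a v + k \<le> lfun n b v"
    and touch: "\<And>v. v \<in> cross_vertices n \<Longrightarrow> lfun n b v = m * lfun n a v + k \<Longrightarrow> v = u \<or> v = w"
    and uV: "u \<in> cross_vertices n" and wV: "w \<in> cross_vertices n"
    and u_on: "lfun n b u = m * lfun n a u + k" and w_on: "lfun n b w = m * lfun n a w + k"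
  shows "{x \<in> cross n. snd (plane_proj n a b x) = m * fst (plane_proj n a b x) + k} = fseg u w"
proof (intro equalityI subsetI)
  fix x assume "x \<in> {x \<in> cross n. snd (plane_proj n a b x) = m * fst (plane_proj n a b x) + k}"
  then have x: "x \<in> cross n" "snd (plane_proj n a b x) - m * fst (plane_proj n a b x) - k = 0"
    by simp_all
  obtain \<mu> where \<mu>: "\<forall>v\<in>cross_vertices n. 0 \<le> \<mu> v" "(\<Sum>v\<in>cross_vertices n. \<mu> v) = 1"
    "x = (\<lambda>j. \<Sum>v\<in>cross_vertices n. \<mu> v * v j)"
    "snd (plane_proj n a b x) - m * fst (plane_proj n a b x) - k
       = (\<Sum>v\<in>cross_vertices n. \<mu> v * (lfun n b v - m * lfun n a v - k))"
    by (rule plane_proj_height_above_line[OF x(1)])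
  have nonneg: "0 \<le> \<mu> v * (lfun n b v - m * lfun n a v - k)" if "v \<in> cross_vertices n" for v
    using that \<mu>(1) above[OF that] by simp
  have "\<forall>v\<in>cross_vertices n. \<mu> v * (lfun n b v - m * lfun n a v - k) = 0"
    using \<mu>(4) x(2) by (simp add: sum_nonneg_eq_0_iff[OF finite_cross_vertices nonneg])
  then have vanish: "\<mu> v = 0" if "v \<in> cross_vertices n" "v \<noteq> u" "v \<noteq> w" for v
    using touch[OF that(1)] that by auto
  show "x \<in> fseg u w"
    unfolding \<mu>(3) by (rule convex_combination_in_fseg[OF finite_cross_vertices uV wV \<mu>(1,2) vanish])
next
  fix x assume x: "x \<in> fseg u w"
  then obtain r where "x = (\<lambda>j. (1 - r) * u j + r * w j)"
    unfolding fseg_def by blast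
  then have "plane_proj n a b x = ((1 - r) * lfun n a u + r * lfun n a w, (1 - r) * lfun n b u + r * lfun n b w)"
    by (simp add: plane_proj_def lfun_affine)
  then have "snd (plane_proj n a b x) = m * fst (plane_proj n a b x) + k"
    by (simp add: u_on w_on algebra_simps)
  moreover have "x \<in> cross n"
    using x fseg_subset_cross[OF uV wV] by blast
  ultimately show "x \<in> {x \<in> cross n. snd (plane_proj n a b x) = m * fst (plane_proj n a b x) + k}"
    by blast
qed

lemma supporting_line_face:
  fixes n :: nat and a b :: "nat \<Rightarrow> real" and m k :: real
  defines "\<pi> \<equiv> plane_proj n a b"
  defines "F \<equiv> {z \<in> \<pi> ` cross n. snd z = m * fst z + k}"
  assumes above: "\<And>v. v \<in> cross_vertices n \<Longrightarrow> m * lfun n a v + k \<le> lfun n b v"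
    and touch: "\<And>v. v \<in> cross_vertices n \<Longrightarrow> lfun n b v = m * lfun n a v + k \<Longrightarrow> v = u \<or> v = w"
    and uV: "u \<in> cross_vertices n" and wV: "w \<in> cross_vertices n"
    and u_on: "lfun n b u = m * lfun n a u + k" and w_on: "lfun n b w = m * lfun n a w + k"
  shows "\<forall>z\<in>\<pi> ` cross n. m * fst z + k \<le> snd z"
    and "{x \<in> cross n. \<pi> x \<in> F} = fseg u w"
    and "F = closed_segment (\<pi> u) (\<pi> w)"
    and "F face_of \<pi> ` cross n"
    and "\<forall>z\<in>F. lower_point (\<pi> ` cross n) z"
proof -
  show below: "\<forall>z\<in>\<pi> ` cross n. m * fst z + k \<le> snd z"
    unfolding \<pi>_def using plane_proj_cross_above_line[OF above] by blast
  show preimage: "{x \<in> cross n. \<pi> x \<in> F} = fseg u w"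
    using plane_proj_cross_line_preimage[OF above touch uV wV u_on w_on]
    unfolding F_def \<pi>_def by blast
  have "F = \<pi> ` fseg u w"
    unfolding preimage[symmetric] F_def by blast
  then show "F = closed_segment (\<pi> u) (\<pi> w)"
    by (simp only: \<pi>_def plane_proj_fseg)
  have "F = \<pi> ` cross n \<inter> {z. (- m, 1) \<bullet> z = k}"
    unfolding F_def inner_prod_def by auto
  also have "\<dots> face_of \<pi> ` cross n"
    unfolding \<pi>_def
  proof (rule face_of_Int_supporting_hyperplane_ge[OF convex_plane_proj_cross])
    fix z assume "z \<in> plane_proj n a b ` cross n"
    then show "k \<le> (- m, 1) \<bullet> z"
      using below unfolding \<pi>_def inner_prod_def by auto
  qed
  finally show "F face_of \<pi> ` cross n" .
  show "\<forall>z\<in>F. lower_point (\<pi> ` cross n) z"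
  proof
    fix z assume z: "z \<in> F"
    have "snd z \<le> snd y" if "y \<in> \<pi> ` cross n" "fst y = fst z" for y
      using below that z unfolding F_def by auto
    then show "lower_point (\<pi> ` cross n) z"
      using z unfolding lower_point_def F_def by blast
  qed
qed

section \<open>Monotone paths, antipodal pairs and flips\<close>

definition monotone_step :: "nat \<Rightarrow> (nat \<Rightarrow> real) \<Rightarrow> (nat \<Rightarrow> real) \<Rightarrow> (nat \<Rightarrow> real) \<Rightarrow> bool"
  where "monotone_step n a u w \<longleftrightarrow> u \<noteq> negv w \<and> lfun n a u < lfun n a w"

lemma monotone_path_iff:
  "monotone_path n a vs \<longleftrightarrow> vs \<noteq> [] \<and> hd vs = negv (unitv n) \<and> last vs = unitv n \<and>
     set vs \<subseteq> cross_vertices n \<and> successively (monotone_step n a) vs"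
  unfolding monotone_path_def successively_conv_nth monotone_step_def by auto

lemma monotone_path_sorted:
  assumes "monotone_path n a vs"
  shows "sorted_wrt (\<lambda>u w. lfun n a u < lfun n a w) vs"
proof -
  have "successively (\<lambda>u w. lfun n a u < lfun n a w) vs"
    using assms unfolding monotone_path_iff monotone_step_def
    by (auto elim: successively_mono)
  then show ?thesis
    by (simp add: successively_conv_sorted_wrt transp_def)
qed

lemma monotone_path_distinct:
  assumes "monotone_path n a vs"
  shows "distinct vs"
proof -
  have "sorted_wrt (<) (map (lfun n a) vs)"
    using monotone_path_sorted[OF assms] by (simp add: sorted_wrt_map)
  then show ?thesis
    by (simp add: strict_sorted_iff distinct_map)
qed

lemma monotone_path_consecutive:
  assumes mp: "monotone_path n a vs" and j: "j + 1 < length vs"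
  shows "monotone_step n a (vs ! j) (vs ! (j + 1))"
    and "\<forall>v\<in>set vs. lfun n a v \<le> lfun n a (vs ! j) \<or> lfun n a (vs ! (j + 1)) \<le> lfun n a v"
proof -
  show "monotone_step n a (vs ! j) (vs ! (j + 1))"
    using mp j by (simp add: monotone_path_iff successively_nth)
  have sorted: "sorted_wrt (\<lambda>u w. lfun n a u < lfun n a w) vs"
    using mp by (rule monotone_path_sorted)
  show "\<forall>v\<in>set vs. lfun n a v \<le> lfun n a (vs ! j) \<or> lfun n a (vs ! (j + 1)) \<le> lfun n a v"
  proof
    fix v assume "v \<in> set vs"
    then obtain i where i: "i < length vs" "v = vs ! i"
      by (auto simp: in_set_conv_nth)
    consider "i < j" | "i = j" | "i = j + 1" | "j + 1 < i"
      by linarith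
    then show "lfun n a v \<le> lfun n a (vs ! j) \<or> lfun n a (vs ! (j + 1)) \<le> lfun n a v"
      using sorted i j by cases (auto simp: sorted_wrt_iff_nth_less less_imp_le)
  qed
qed

lemma monotone_path_length:
  assumes "monotone_path n a vs"
  shows "2 \<le> length vs"
proof (cases vs)
  case (Cons x xs)
  then show ?thesis
    using assms by (cases xs) (auto simp: monotone_path_def)
qed (use assms in \<open>simp add: monotone_path_def\<close>)

lemma monotone_path_step_at:
  assumes "monotone_path n a (xs @ u # w # ys)"
  shows "monotone_step n a u w"
  using assms by (simp add: monotone_path_iff successively_append_iff)

lemma monotone_path_remove:
  assumes mp: "monotone_path n a (xs @ x # v # y # ys)" and step: "monotone_step n a x y"
  shows "monotone_path n a (xs @ x # y # ys)"
proof -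
  have "successively (monotone_step n a) ((xs @ [x]) @ v # y # ys)"
    using mp by (simp add: monotone_path_iff)
  then have "successively (monotone_step n a) ((xs @ [x]) @ y # ys)"
    using step by (simp only: successively_append_iff) simp
  then show ?thesis
    using mp by (auto simp: monotone_path_iff hd_append)
qed

definition antipodal_pairs :: "nat \<Rightarrow> (nat \<Rightarrow> real) list \<Rightarrow> nat set"
  where "antipodal_pairs n vs = {i \<in> {1..<n}. unitv i \<in> set vs \<and> negv (unitv i) \<in> set vs}"

lemma finite_antipodal_pairs [simp]: "finite (antipodal_pairs n vs)"
  by (simp add: antipodal_pairs_def)

lemma set_insert_at: "set (take i vs @ x # drop i vs) = insert x (set vs)"
  by (metis Un_insert_right append_take_drop_id list.set(2) set_append)

lemma card_antipodal_pairs_insert_at: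
  "card (antipodal_pairs n vs) \<le> card (antipodal_pairs n (take i vs @ x # drop i vs))"
  "card (antipodal_pairs n (take i vs @ x # drop i vs)) \<le> card (antipodal_pairs n vs) + 1"
proof -
  show "card (antipodal_pairs n vs) \<le> card (antipodal_pairs n (take i vs @ x # drop i vs))"
    unfolding antipodal_pairs_def set_insert_at by (intro card_mono) auto
  obtain k where "\<forall>j. x = unitv j \<or> x = negv (unitv j) \<longrightarrow> j = k"
    by (metis negv_eq_iff unitv_eq_iff unitv_neq_negv)
  then have "antipodal_pairs n (take i vs @ x # drop i vs) \<subseteq> insert k (antipodal_pairs n vs)"
    unfolding antipodal_pairs_def set_insert_at by auto
  then have "card (antipodal_pairs n (take i vs @ x # drop i vs)) \<le> card (insert k (antipodal_pairs n vs))"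
    by (intro card_mono) auto
  also have "\<dots> \<le> card (antipodal_pairs n vs) + 1"
    by (simp add: card_insert_if)
  finally show "card (antipodal_pairs n (take i vs @ x # drop i vs)) \<le> card (antipodal_pairs n vs) + 1" .
qed

lemma card_antipodal_pairs_flip:
  "(p, q) \<in> flip_rel n a \<Longrightarrow> card (antipodal_pairs n p) \<le> card (antipodal_pairs n q) + 1"
  unfolding flip_rel_def using card_antipodal_pairs_insert_at(1)[of n] card_antipodal_pairs_insert_at(2)[of n]
  by (auto intro: le_SucI)

lemma card_antipodal_pairs_relpow:
  "(p, q) \<in> flip_rel n a ^^ k \<Longrightarrow> card (antipodal_pairs n p) \<le> card (antipodal_pairs n q) + k"
proof (induction k arbitrary: q)
  case (Suc k)
  then obtain y where "(p, y) \<in> flip_rel n a ^^ k" "(y, q) \<in> flip_rel n a"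
    by auto
  then show ?case
    using Suc.IH card_antipodal_pairs_flip by fastforce
qed simp

lemma successively_upt:
  "(\<And>i. m \<le> i \<Longrightarrow> Suc i < k \<Longrightarrow> P i (Suc i)) \<Longrightarrow> successively P [m..<k]"
  unfolding successively_conv_nth by (simp add: add.commute)

lemma antipodal_pairs_extremal_path: "antipodal_pairs n (extremal_path n) = {2..<n}"
  unfolding antipodal_pairs_def extremal_path_def by auto

locale increasing_weights =
  fixes n :: nat and a :: "nat \<Rightarrow> real"
  assumes n_pos: "1 \<le> n"
    and a_1_pos: "0 < a 1"
    and a_increasing: "\<And>i. 1 \<le> i \<Longrightarrow> i < n \<Longrightarrow> a i < a (Suc i)"
begin

lemma a_less: "1 \<le> i \<Longrightarrow> i < j \<Longrightarrow> j \<le> n \<Longrightarrow> a i < a j"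
  by (rule lift_Suc_mono_less_ivl[where N = "{1..<n}"]) (auto simp: a_increasing)

lemma a_pos: "1 \<le> i \<Longrightarrow> i \<le> n \<Longrightarrow> 0 < a i"
  using a_1_pos a_less[of 1 i] by (cases "i = 1") auto

lemma a_n_pos: "0 < a n"
  using a_pos n_pos by simp

lemma a_square_le: "1 \<le> i \<Longrightarrow> i \<le> n \<Longrightarrow> (a i)\<^sup>2 \<le> (a n)\<^sup>2"
  using a_less[of i n] a_pos[of i] by (cases "i = n") (auto intro: power_mono)

lemma a_eq_iff: "1 \<le> i \<Longrightarrow> i \<le> n \<Longrightarrow> 1 \<le> j \<Longrightarrow> j \<le> n \<Longrightarrow> a i = a j \<longleftrightarrow> i = j"
  by (metis a_less less_irrefl nat_neq_iff)

lemma abs_lfun_cross_vertex: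
  assumes "v \<in> cross_vertices n"
  shows "a 1 \<le> \<bar>lfun n a v\<bar>" "\<bar>lfun n a v\<bar> \<le> a n"
  using assms a_less[of 1] a_less[of _ n] a_pos
  by (auto elim!: cross_vertices_cases simp: lfun_unitv lfun_negv le_less)

lemma abs_lfun_less:
  assumes "v \<in> cross_vertices n" "v \<noteq> unitv n" "v \<noteq> negv (unitv n)"
  shows "\<bar>lfun n a v\<bar> < a n"
  using assms a_less[of _ n] a_pos
  by (auto elim!: cross_vertices_cases simp: lfun_unitv lfun_negv le_less)

lemma inj_on_lfun: "inj_on (lfun n a) (cross_vertices n)"
proof (rule inj_onI)
  fix u w assume "u \<in> cross_vertices n" "w \<in> cross_vertices n" "lfun n a u = lfun n a w"
  then show "u = w"
    using a_pos by (auto elim!: cross_vertices_cases simp: lfun_unitv lfun_negv a_eq_iff)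
      (metis add_pos_pos neg_0_equal_iff_equal less_numeral_extra(3) eq_neg_iff_add_eq_0)+
qed

lemma lfun_after_antipode_le:
  assumes mp: "monotone_path n a (xs @ negv (unitv i) # y # ys)"
    and i: "1 \<le> i" "i \<le> n" and e: "unitv i \<in> set (xs @ negv (unitv i) # y # ys)"
  shows "lfun n a y \<le> a i"
proof -
  have sorted: "sorted_wrt (\<lambda>u w. lfun n a u < lfun n a w) (xs @ negv (unitv i) # y # ys)"
    using mp by (rule monotone_path_sorted)
  have e_i: "lfun n a (unitv i) = a i"
    using i by (rule lfun_unitv)
  have "unitv i \<notin> set xs"
    using sorted a_pos[OF i] by (force simp: sorted_wrt_append lfun_negv e_i)
  then have "unitv i \<in> set (y # ys)"
    using e by auto
  then show ?thesis
    using sorted by (auto simp: sorted_wrt_append e_i less_imp_le)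
qed

lemma antipodal_pairs_subset:
  assumes mp: "monotone_path n a p"
  shows "antipodal_pairs n p \<subseteq> {2..<n}"
proof
  fix i assume i: "i \<in> antipodal_pairs n p"
  have "i \<noteq> 1"
  proof
    assume "i = 1"
    then have e: "unitv 1 \<in> set p" and "negv (unitv 1) \<in> set p"
      using i by (auto simp: antipodal_pairs_def)
    then obtain xs zs where p: "p = xs @ negv (unitv 1) # zs"
      by (meson split_list)
    have "zs \<noteq> []"
      using mp p by (auto simp: monotone_path_def)
    then obtain y ys where zs: "zs = y # ys"
      by (cases zs) auto
    have step: "monotone_step n a (negv (unitv 1)) y"
      using mp unfolding p zs by (rule monotone_path_step_at)
    have yV: "y \<in> cross_vertices n"
      using mp p zs by (auto simp: monotone_path_def)
    have e1V: "unitv 1 \<in> cross_vertices n"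
      using n_pos by (auto simp: cross_vertices_def)
    have e1: "lfun n a (unitv 1) = a 1"
      using n_pos by (simp add: lfun_unitv)
    have "lfun n a y \<le> a 1"
      using mp e n_pos unfolding p zs by (intro lfun_after_antipode_le) auto
    moreover have "- a 1 < lfun n a y"
      using step unfolding monotone_step_def lfun_negv e1 by simp
    moreover have "a 1 \<le> \<bar>lfun n a y\<bar>"
      using yV by (rule abs_lfun_cross_vertex)
    ultimately have "lfun n a y = lfun n a (unitv 1)"
      unfolding e1 by (simp add: abs_real_def split: if_splits)
    then have "y = unitv 1"
      by (rule inj_onD[OF inj_on_lfun _ yV e1V])
    then show False
      using step by (simp add: monotone_step_def)
  qed
  then show "i \<in> {2..<n}"
    using i by (auto simp: antipodal_pairs_def)
qed

lemma card_antipodal_pairs_le: "monotone_path n a p \<Longrightarrow> card (antipodal_pairs n p) \<le> n - 2"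
  using card_mono[OF _ antipodal_pairs_subset] by fastforce

lemma monotone_step_over_antipode:
  assumes mp: "monotone_path n a (xs @ x # negv (unitv i) # y # ys)"
    and i: "1 \<le> i" "i \<le> n" and e: "unitv i \<in> set (xs @ x # negv (unitv i) # y # ys)"
  shows "monotone_step n a x y"
proof -
  have neg_e_i: "lfun n a (negv (unitv i)) = - a i"
    using i by (simp add: lfun_negv lfun_unitv)
  have "monotone_step n a x (negv (unitv i))"
    using mp by (rule monotone_path_step_at)
  moreover have "monotone_step n a (negv (unitv i)) y"
    using monotone_path_step_at[of n a "xs @ [x]"] mp by simp
  ultimately have "lfun n a x < - a i" "- a i < lfun n a y"
    unfolding monotone_step_def neg_e_i by simp_all
  moreover have "lfun n a y \<le> a i"
    using mp e i by (intro lfun_after_antipode_le[of "xs @ [x]"]) simp_all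
  ultimately show ?thesis
    by (auto simp: monotone_step_def lfun_negv)
qed

lemma delete_antipode:
  assumes mp: "monotone_path n a p" and i: "i \<in> antipodal_pairs n p"
  obtains p' where "monotone_path n a p'" "antipodal_pairs n p' = antipodal_pairs n p - {i}"
    "(p, p') \<in> flip_rel n a"
proof -
  have i_range: "1 \<le> i" "i < n" and e: "unitv i \<in> set p" "negv (unitv i) \<in> set p"
    using i by (auto simp: antipodal_pairs_def)
  obtain xs zs where p: "p = xs @ negv (unitv i) # zs"
    using e(2) by (meson split_list)
  have "xs \<noteq> []"
    using mp p i_range by (auto simp: monotone_path_def)
  then obtain xs' x where xs: "xs = xs' @ [x]"
    by (cases xs rule: rev_cases) auto
  have "zs \<noteq> []"
    using mp p by (auto simp: monotone_path_def)
  then obtain y ys where zs: "zs = y # ys"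
    by (cases zs) auto
  define p' where "p' = xs' @ x # y # ys"
  have mp': "monotone_path n a (xs' @ x # negv (unitv i) # y # ys)"
    using mp by (simp add: p xs zs)
  moreover have "unitv i \<in> set (xs' @ x # negv (unitv i) # y # ys)"
    using e(1) by (simp add: p xs zs)
  ultimately have "monotone_step n a x y"
    using i_range by (intro monotone_step_over_antipode) simp_all
  then have "monotone_path n a p'"
    unfolding p'_def by (rule monotone_path_remove[OF mp'])
  moreover have "set p' = set p - {negv (unitv i)}"
    using monotone_path_distinct[OF mp] by (auto simp: p'_def p xs zs)
  then have "antipodal_pairs n p' = antipodal_pairs n p - {i}"
    by (auto simp: antipodal_pairs_def)
  moreover have "p = take (length xs) p' @ negv (unitv i) # drop (length xs) p'"
    by (simp add: p p'_def xs zs)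
  then have "(p, p') \<in> flip_rel n a"
    using mp \<open>monotone_path n a p'\<close> unfolding flip_rel_def by blast
  ultimately show ?thesis
    using that by blast
qed

lemma flips_to_no_antipodal_pairs:
  assumes "monotone_path n a p"
  shows "\<exists>q. monotone_path n a q \<and> antipodal_pairs n q = {} \<and>
    (p, q) \<in> flip_rel n a ^^ card (antipodal_pairs n p)"
  using assms
proof (induction "card (antipodal_pairs n p)" arbitrary: p)
  case 0
  then show ?case
    by auto
next
  case (Suc k)
  then obtain i where "i \<in> antipodal_pairs n p"
    by (metis card.empty ex_in_conv nat.distinct(1))
  then obtain p' where p': "monotone_path n a p'" "antipodal_pairs n p' = antipodal_pairs n p - {i}"
    "(p, p') \<in> flip_rel n a"
    using delete_antipode[OF Suc.prems] by blast
  then have "k = card (antipodal_pairs n p')"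
    using Suc.hyps(2) \<open>i \<in> antipodal_pairs n p\<close> by simp
  then obtain q where "monotone_path n a q" "antipodal_pairs n q = {}" "(p', q) \<in> flip_rel n a ^^ k"
    using Suc.hyps(1) p'(1) by blast
  then show ?case
    using p'(3) Suc.hyps(2) by (metis relpow_Suc_I2)
qed

lemma extremal_path_monotone:
  assumes "2 \<le> n"
  shows "monotone_path n a (extremal_path n)"
  unfolding monotone_path_iff
proof (intro conjI)
  have descending: "rev [1..<n + 1] = n # rev [1..<n]"
    using n_pos by simp
  have ascending: "[2..<n + 1] = 2 # [3..<n + 1]"
    using assms by (simp add: upt_rec)
  show "extremal_path n \<noteq> []" "hd (extremal_path n) = negv (unitv n)"
    unfolding extremal_path_def descending by simp_all
  show "last (extremal_path n) = unitv n"
    unfolding extremal_path_def ascending using assms by simp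
  show "set (extremal_path n) \<subseteq> cross_vertices n"
    unfolding extremal_path_def cross_vertices_def by auto
  have "successively (monotone_step n a) (map (\<lambda>i. negv (unitv i)) (rev [1..<n + 1]))"
    unfolding successively_map successively_rev
    by (rule successively_upt) (auto simp: monotone_step_def lfun_negv lfun_unitv a_increasing)
  moreover have "successively (monotone_step n a) (map unitv [2..<n + 1])"
    unfolding successively_map
    by (rule successively_upt) (auto simp: monotone_step_def lfun_unitv a_increasing)
  moreover have "monotone_step n a (negv (unitv 1)) (unitv 2)"
    using assms a_pos[of 1] a_pos[of 2] by (auto simp: monotone_step_def lfun_negv lfun_unitv)
  ultimately show "successively (monotone_step n a) (extremal_path n)"
    unfolding extremal_path_def successively_append_iff ascending
    using assms by (simp add: last_map last_rev hd_upt)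
qed

end

section \<open>Coherent paths are the paths without antipodal pairs\<close>

lemma mult_nonneg_outside_interval:
  fixes s t x :: real
  assumes "s \<le> t" "x \<le> s \<or> t \<le> x"
  shows "0 \<le> (x - s) * (x - t)"
  using assms by (auto intro: mult_nonpos_nonpos mult_nonneg_nonneg)

lemma secant_of_square_below:
  fixes s t x A :: real
  assumes "s < x" "x < t" "s\<^sup>2 \<le> A" "t\<^sup>2 \<le> A" "s\<^sup>2 < A \<or> t\<^sup>2 < A"
  shows "(s + t) * x - s * t < A"
proof -
  have "(t - s) * ((s + t) * x - s * t - A) = (t - x) * (s\<^sup>2 - A) + (x - s) * (t\<^sup>2 - A)"
    by (simp add: algebra_simps power2_eq_square)
  also have "\<dots> < 0"
  proof (cases "s\<^sup>2 < A")
    case True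
    have "(t - x) * (s\<^sup>2 - A) < 0"
      using True assms by (intro mult_pos_neg) auto
    moreover have "(x - s) * (t\<^sup>2 - A) \<le> 0"
      using assms by (intro mult_nonneg_nonpos) auto
    ultimately show ?thesis
      by linarith
  next
    case False
    then have "(x - s) * (t\<^sup>2 - A) < 0"
      using assms by (intro mult_pos_neg) auto
    moreover have "(t - x) * (s\<^sup>2 - A) \<le> 0"
      using assms by (intro mult_nonneg_nonpos) auto
    ultimately show ?thesis
      by linarith
  qed
  finally show ?thesis
    using assms(1,2) by (simp add: mult_less_0_iff)
qed

lemma list_bracket:
  fixes xs :: "'a :: linorder list"
  assumes "2 \<le> length xs" "hd xs \<le> x" "x \<le> last xs"
  shows "\<exists>j. Suc j < length xs \<and> xs ! j \<le> x \<and> x \<le> xs ! Suc j"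
  using assms
proof (induction xs)
  case (Cons y ys)
  then obtain z zs where ys: "ys = z # zs"
    by (cases ys) auto
  show ?case
  proof (cases "x \<le> z")
    case True
    then show ?thesis
      using Cons.prems ys by (intro exI[of _ 0]) auto
  next
    case False
    have "2 \<le> length ys" "hd ys \<le> x" "x \<le> last ys"
      using Cons.prems False ys by (cases zs; auto)+
    then obtain j where "Suc j < length ys" "ys ! j \<le> x" "x \<le> ys ! Suc j"
      using Cons.IH by blast
    then show ?thesis
      by (intro exI[of _ "Suc j"]) auto
  qed
qed simp

context increasing_weights
begin

lemma monotone_path_bracket:
  assumes mp: "monotone_path n a p" and x: "\<bar>x\<bar> \<le> a n"
  obtains j where "j + 1 < length p" "lfun n a (p ! j) \<le> x" "x \<le> lfun n a (p ! (j + 1))"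
proof -
  have "hd (map (lfun n a) p) = - a n" "last (map (lfun n a) p) = a n"
    using mp monotone_path_length[OF mp] n_pos
    by (auto simp: monotone_path_def hd_map last_map lfun_unitv lfun_negv)
  then show ?thesis
    using list_bracket[of "map (lfun n a) p" x] monotone_path_length[OF mp] x that
    by (auto simp: abs_le_iff)
qed

text \<open>Heights of the lifting: if \<open>q\<close> has no antipodal pairs, its vertices go to the parabola
  \<open>y = x\<^sup>2 - a\<^sub>n\<^sup>2\<close> and all other vertices to height at least \<open>0\<close>.\<close>
definition parabola_lift :: "(nat \<Rightarrow> real) list \<Rightarrow> nat \<Rightarrow> real"
  where "parabola_lift q i =
    (if unitv i \<in> set q then (a i)\<^sup>2 - (a n)\<^sup>2
     else if negv (unitv i) \<in> set q then (a n)\<^sup>2 - (a i)\<^sup>2 else 0)"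

context
  fixes q :: "(nat \<Rightarrow> real) list"
  assumes q_monotone: "monotone_path n a q" and q_no_pairs: "antipodal_pairs n q = {}"
begin

lemma parabola_lift_on_path:
  assumes v: "v \<in> set q"
  shows "lfun n (parabola_lift q) v = (lfun n a v)\<^sup>2 - (a n)\<^sup>2"
proof -
  have "v \<in> cross_vertices n"
    using q_monotone v by (auto simp: monotone_path_def)
  then show ?thesis
  proof (cases rule: cross_vertices_cases)
    case (1 i)
    then show ?thesis
      using v by (simp add: lfun_unitv parabola_lift_def)
  next
    case (2 i)
    have "i = n" if "unitv i \<in> set q"
      using q_no_pairs that v 2 by (auto simp: antipodal_pairs_def)
    then show ?thesis
      using v 2 by (auto simp: lfun_unitv lfun_negv parabola_lift_def)
  qed
qed

lemma parabola_lift_off_path: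
  assumes vV: "v \<in> cross_vertices n" and v: "v \<notin> set q"
  shows "0 \<le> lfun n (parabola_lift q) v" "(lfun n a v)\<^sup>2 < (a n)\<^sup>2"
proof -
  have "negv (unitv n) \<in> set q" "unitv n \<in> set q"
    using q_monotone hd_in_set last_in_set by (fastforce simp: monotone_path_def)+
  then have "\<bar>lfun n a v\<bar> < \<bar>a n\<bar>"
    using abs_lfun_less vV v a_n_pos by (metis abs_of_pos)
  then show "(lfun n a v)\<^sup>2 < (a n)\<^sup>2"
    by (metis abs_le_square_iff not_le)
  show "0 \<le> lfun n (parabola_lift q) v"
    using vV v a_square_le
    by (cases rule: cross_vertices_cases) (auto simp: lfun_unitv lfun_negv parabola_lift_def)
qed

lemma parabola_lift_off_path_above_chord:
  fixes u w v :: "nat \<Rightarrow> real"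
  defines "s \<equiv> lfun n a u" and "t \<equiv> lfun n a w"
  assumes uV: "u \<in> cross_vertices n" and wV: "w \<in> cross_vertices n" and st: "s \<le> t"
    and not_diameter: "\<not> (u = negv (unitv n) \<and> w = unitv n)"
    and vV: "v \<in> cross_vertices n" and v: "v \<notin> set q"
  shows "(s + t) * lfun n a v + (- (s * t) - (a n)\<^sup>2) < lfun n (parabola_lift q) v"
proof (cases "lfun n a v \<le> s \<or> t \<le> lfun n a v")
  case True
  then have "0 \<le> (lfun n a v - s) * (lfun n a v - t)"
    using st by (intro mult_nonneg_outside_interval)
  then show ?thesis
    using parabola_lift_off_path[OF vV v] by (simp add: algebra_simps power2_eq_square)
next
  case False
  have "\<not> (s\<^sup>2 = (a n)\<^sup>2 \<and> t\<^sup>2 = (a n)\<^sup>2)"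
  proof
    assume "s\<^sup>2 = (a n)\<^sup>2 \<and> t\<^sup>2 = (a n)\<^sup>2"
    then have "s = - a n" "t = a n"
      using False a_n_pos by (auto simp: power2_eq_iff)
    then have "lfun n a u = lfun n a (negv (unitv n))" "lfun n a w = lfun n a (unitv n)"
      using n_pos by (simp_all add: s_def t_def lfun_negv lfun_unitv)
    moreover have "negv (unitv n) \<in> cross_vertices n" "unitv n \<in> cross_vertices n"
      using n_pos by (auto simp: cross_vertices_def)
    ultimately show False
      using inj_onD[OF inj_on_lfun] uV wV not_diameter by metis
  qed
  moreover have "s\<^sup>2 \<le> (a n)\<^sup>2" "t\<^sup>2 \<le> (a n)\<^sup>2"
    using abs_lfun_cross_vertex(2) uV wV a_n_pos unfolding s_def t_def
    by (metis abs_le_square_iff abs_of_pos)+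
  ultimately have "(s + t) * lfun n a v - s * t < (a n)\<^sup>2"
    using False by (intro secant_of_square_below) (auto simp: less_le)
  then show ?thesis
    using parabola_lift_off_path(1)[OF vV v] by simp
qed

lemma parabola_lift_above_chord:
  fixes u w v :: "nat \<Rightarrow> real"
  defines "s \<equiv> lfun n a u" and "t \<equiv> lfun n a w"
  assumes u: "u \<in> set q" and w: "w \<in> set q" and st: "s \<le> t"
    and gap: "\<forall>v'\<in>set q. lfun n a v' \<le> s \<or> t \<le> lfun n a v'"
    and not_diameter: "\<not> (u = negv (unitv n) \<and> w = unitv n)"
    and vV: "v \<in> cross_vertices n"
  shows "(s + t) * lfun n a v + (- (s * t) - (a n)\<^sup>2) \<le> lfun n (parabola_lift q) v"
    and "lfun n (parabola_lift q) v = (s + t) * lfun n a v + (- (s * t) - (a n)\<^sup>2) \<Longrightarrow> v = u \<or> v = w"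
proof -
  have uV: "u \<in> cross_vertices n" and wV: "w \<in> cross_vertices n"
    using q_monotone u w by (auto simp: monotone_path_def)
  note off_path = parabola_lift_off_path_above_chord[OF uV wV st[unfolded s_def t_def] not_diameter vV,
      folded s_def t_def]
  have on_path: "lfun n (parabola_lift q) v - ((s + t) * lfun n a v + (- (s * t) - (a n)\<^sup>2))
      = (lfun n a v - s) * (lfun n a v - t)" if v: "v \<in> set q"
    using parabola_lift_on_path[OF v] by (simp add: algebra_simps power2_eq_square)
  have "0 \<le> (lfun n a v - s) * (lfun n a v - t)" if "v \<in> set q"
    using gap that st by (intro mult_nonneg_outside_interval) auto
  then show "(s + t) * lfun n a v + (- (s * t) - (a n)\<^sup>2) \<le> lfun n (parabola_lift q) v"
    using on_path off_path by (cases "v \<in> set q") force+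
  assume on_chord: "lfun n (parabola_lift q) v = (s + t) * lfun n a v + (- (s * t) - (a n)\<^sup>2)"
  then have "v \<in> set q"
    using off_path by force
  then have "(lfun n a v - s) * (lfun n a v - t) = 0"
    using on_chord on_path by simp
  then have "lfun n a v = lfun n a u \<or> lfun n a v = lfun n a w"
    unfolding s_def t_def by simp
  then show "v = u \<or> v = w"
    using inj_onD[OF inj_on_lfun] vV uV wV by metis
qed

lemma parabola_lift_chord_face:
  fixes u w :: "nat \<Rightarrow> real"
  defines "\<pi> \<equiv> plane_proj n a (parabola_lift q)"
    and "m \<equiv> lfun n a u + lfun n a w" and "k \<equiv> - (lfun n a u * lfun n a w) - (a n)\<^sup>2"
  defines "F \<equiv> {z \<in> \<pi> ` cross n. snd z = m * fst z + k}"
  assumes u: "u \<in> set q" and w: "w \<in> set q" and uw: "lfun n a u \<le> lfun n a w"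
    and gap: "\<forall>v\<in>set q. lfun n a v \<le> lfun n a u \<or> lfun n a w \<le> lfun n a v"
    and not_diameter: "\<not> (u = negv (unitv n) \<and> w = unitv n)"
  shows "\<forall>z\<in>\<pi> ` cross n. m * fst z + k \<le> snd z"
    and "{x \<in> cross n. \<pi> x \<in> F} = fseg u w"
    and "F = closed_segment (\<pi> u) (\<pi> w)"
    and "F face_of \<pi> ` cross n"
    and "\<forall>z\<in>F. lower_point (\<pi> ` cross n) z"
proof -
  have uV: "u \<in> cross_vertices n" and wV: "w \<in> cross_vertices n"
    using q_monotone u w by (auto simp: monotone_path_def)
  have "lfun n (parabola_lift q) u = m * lfun n a u + k" "lfun n (parabola_lift q) w = m * lfun n a w + k"
    using parabola_lift_on_path u w unfolding m_def k_def by (simp_all add: algebra_simps power2_eq_square)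
  note face = supporting_line_face[where b = "parabola_lift q" and m = m and k = k,
      OF parabola_lift_above_chord[OF u w uw gap not_diameter, folded m_def k_def] uV wV this]
  show "\<forall>z\<in>\<pi> ` cross n. m * fst z + k \<le> snd z"
    unfolding \<pi>_def F_def by (rule face(1))
  show "{x \<in> cross n. \<pi> x \<in> F} = fseg u w"
    unfolding \<pi>_def F_def by (rule face(2))
  show "F = closed_segment (\<pi> u) (\<pi> w)"
    unfolding \<pi>_def F_def by (rule face(3))
  show "F face_of \<pi> ` cross n"
    unfolding \<pi>_def F_def by (rule face(4))
  show "\<forall>z\<in>F. lower_point (\<pi> ` cross n) z"
    unfolding \<pi>_def F_def by (rule face(5))
qed

lemma path_vertex_lower_vertex:
  assumes v: "v \<in> set q"
  shows "lower_vertex (plane_proj n a (parabola_lift q) ` cross n) (plane_proj n a (parabola_lift q) v)"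
proof -
  have "\<forall>v'\<in>set q. lfun n a v' \<le> lfun n a v \<or> lfun n a v \<le> lfun n a v'"
    by auto
  moreover have "\<not> (v = negv (unitv n) \<and> v = unitv n)"
    by auto
  ultimately have face: "{plane_proj n a (parabola_lift q) v} face_of plane_proj n a (parabola_lift q) ` cross n"
    "\<forall>z\<in>{plane_proj n a (parabola_lift q) v}. lower_point (plane_proj n a (parabola_lift q) ` cross n) z"
    using parabola_lift_chord_face(3-5)[OF v v order.refl] by simp_all
  then show ?thesis
    by (simp add: lower_vertex_def)
qed

lemma path_edge_lower_edge:
  assumes j: "j + 1 < length q"
  shows "\<exists>E. lower_edge (plane_proj n a (parabola_lift q) ` cross n) E \<and>
    fseg (q ! j) (q ! (j + 1)) = {x \<in> cross n. plane_proj n a (parabola_lift q) x \<in> E}"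
proof -
  note consecutive = monotone_path_consecutive[OF q_monotone j]
  have in_q: "q ! j \<in> set q" "q ! (j + 1) \<in> set q"
    using j by simp_all
  have less: "lfun n a (q ! j) < lfun n a (q ! (j + 1))"
    and not_diameter: "\<not> (q ! j = negv (unitv n) \<and> q ! (j + 1) = unitv n)"
    using consecutive(1) by (auto simp: monotone_step_def)
  note face = parabola_lift_chord_face[OF in_q less_imp_le[OF less] consecutive(2) not_diameter]
  let ?E = "closed_segment (plane_proj n a (parabola_lift q) (q ! j)) (plane_proj n a (parabola_lift q) (q ! (j + 1)))"
  have "plane_proj n a (parabola_lift q) (q ! j) \<noteq> plane_proj n a (parabola_lift q) (q ! (j + 1))"
    using less by (auto simp: plane_proj_def)
  then have "aff_dim ?E = 1"
    unfolding segment_convex_hull aff_dim_convex_hull by simp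
  then show ?thesis
    using face(2-5) by (auto simp: lower_edge_def)
qed

lemma lower_vertex_on_path:
  assumes p: "lower_vertex (plane_proj n a (parabola_lift q) ` cross n) p"
  shows "p \<in> plane_proj n a (parabola_lift q) ` set q"
proof -
  let ?\<pi> = "plane_proj n a (parabola_lift q)"
  have pQ: "p \<in> ?\<pi> ` cross n" and p_face: "{p} face_of ?\<pi> ` cross n"
    and p_lower: "lower_point (?\<pi> ` cross n) p"
    using p by (auto simp: lower_vertex_def lower_point_def)
  have "\<bar>fst p\<bar> \<le> a n"
    using pQ abs_lfun_cross_le abs_lfun_cross_vertex(2) by (auto simp: plane_proj_def)
  then obtain j where j: "j + 1 < length q"
    and bracket: "lfun n a (q ! j) \<le> fst p" "fst p \<le> lfun n a (q ! (j + 1))"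
    by (rule monotone_path_bracket[OF q_monotone])
  let ?u = "q ! j" and ?w = "q ! (j + 1)"
  note consecutive = monotone_path_consecutive[OF q_monotone j]
  have in_q: "?u \<in> set q" "?w \<in> set q"
    using j by simp_all
  have less: "lfun n a ?u < lfun n a ?w" and not_diameter: "\<not> (?u = negv (unitv n) \<and> ?w = unitv n)"
    using consecutive(1) by (auto simp: monotone_step_def)
  note face = parabola_lift_chord_face[OF in_q less_imp_le[OF less] consecutive(2) not_diameter]
  have "closed_segment (?\<pi> ?u) (?\<pi> ?w) \<subseteq> ?\<pi> ` cross n"
    using face(3) by blast
  moreover have "snd (?\<pi> ?u) = (lfun n a ?u + lfun n a ?w) * fst (?\<pi> ?u) + (- (lfun n a ?u * lfun n a ?w) - (a n)\<^sup>2)"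
    "snd (?\<pi> ?w) = (lfun n a ?u + lfun n a ?w) * fst (?\<pi> ?w) + (- (lfun n a ?u * lfun n a ?w) - (a n)\<^sup>2)"
    using face(3) ends_in_segment by blast+
  moreover have "fst (?\<pi> ?u) < fst (?\<pi> ?w)" "fst (?\<pi> ?u) \<le> fst p" "fst p \<le> fst (?\<pi> ?w)"
    using less bracket by (simp_all add: plane_proj_def)
  ultimately have "p \<in> closed_segment (?\<pi> ?u) (?\<pi> ?w)"
    using lower_point_in_segment_on_line[OF face(1)] p_lower by blast
  moreover have "?\<pi> ?u \<in> ?\<pi> ` cross n" "?\<pi> ?w \<in> ?\<pi> ` cross n"
    using in_q q_monotone cross_vertex_in_cross by (auto simp: monotone_path_def)
  ultimately have "p = ?\<pi> ?u \<or> p = ?\<pi> ?w"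
    using face_singleton_on_segment[OF p_face] by blast
  then show ?thesis
    using in_q by blast
qed

lemma coherent_if_no_antipodal_pairs: "coherent_path n a q"
  unfolding coherent_path_iff
proof (intro conjI exI[of _ "parabola_lift q"] q_monotone allI impI)
  show "set (map (plane_proj n a (parabola_lift q)) q)
      = {p. lower_vertex (plane_proj n a (parabola_lift q) ` cross n) p}"
    using path_vertex_lower_vertex lower_vertex_on_path by auto
  show "sorted_wrt (\<lambda>p q. fst p < fst q) (map (plane_proj n a (parabola_lift q)) q)"
    using monotone_path_sorted[OF q_monotone] by (simp add: sorted_wrt_map plane_proj_def)
qed (rule path_edge_lower_edge)

end

text \<open>By central symmetry of the projection, if both \<open>\<pi> e\<^sub>i\<close> and \<open>\<pi> (-e\<^sub>i)\<close> are lower points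
  they lie on the segment from \<open>\<pi> (-e\<^sub>n)\<close> to \<open>\<pi> e\<^sub>n\<close>, so neither is extreme.\<close>
lemma antipodal_lower_vertices_absurd:
  fixes b :: "nat \<Rightarrow> real"
  defines "\<pi> \<equiv> plane_proj n a b"
  assumes i: "1 \<le> i" "i < n"
    and lower_pos: "lower_vertex (\<pi> ` cross n) (\<pi> (unitv i))"
    and lower_neg: "lower_vertex (\<pi> ` cross n) (\<pi> (negv (unitv i)))"
  shows False
proof -
  have ends: "negv (unitv n) \<in> cross_vertices n" "unitv n \<in> cross_vertices n"
    using n_pos by (auto simp: cross_vertices_def)
  have proj_ends: "\<pi> (negv (unitv n)) = (- a n, - b n)" "\<pi> (unitv n) = (a n, b n)"
    using n_pos by (simp_all add: \<pi>_def plane_proj_def lfun_negv lfun_unitv)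
  have proj_i: "\<pi> (unitv i) = (a i, b i)" "\<pi> (negv (unitv i)) = (- a i, - b i)"
    using i by (simp_all add: \<pi>_def plane_proj_def lfun_negv lfun_unitv)
  define r where "r = a i / a n"
  have r: "0 < r" "r < 1" "r * a n = a i"
    using a_pos[of i] a_less[of i n] a_n_pos i by (simp_all add: r_def field_simps)
  define seg where "seg l = (1 - l) *\<^sub>R \<pi> (negv (unitv n)) + l *\<^sub>R \<pi> (unitv n)" for l
  have seg_eq: "seg l = ((2 * l - 1) * a n, (2 * l - 1) * b n)" for l
    by (simp add: seg_def proj_ends algebra_simps)
  have seg_in: "seg l \<in> closed_segment (\<pi> (negv (unitv n))) (\<pi> (unitv n))" if "0 \<le> l" "l \<le> 1" for l
    using that unfolding seg_def closed_segment_def by blast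
  have seg_Q: "seg l \<in> \<pi> ` cross n" if "0 \<le> l" "l \<le> 1" for l
    using seg_in[OF that] fseg_subset_cross[OF ends] unfolding \<pi>_def plane_proj_fseg[symmetric] by blast
  have "2 * ((1 + r) / 2) - 1 = r" "2 * ((1 - r) / 2) - 1 = - r"
    by (simp_all add: field_simps)
  then have "seg ((1 + r) / 2) = (a i, r * b n)" "seg ((1 - r) / 2) = (- a i, - (r * b n))"
    unfolding seg_eq using r(3) by simp_all
  note seg_values = this
  have "seg ((1 + r) / 2) \<in> \<pi> ` cross n" "seg ((1 - r) / 2) \<in> \<pi> ` cross n"
    using r by (simp_all add: seg_Q)
  moreover have "\<forall>y\<in>\<pi> ` cross n. fst y = a i \<longrightarrow> b i \<le> snd y"
    "\<forall>y\<in>\<pi> ` cross n. fst y = - a i \<longrightarrow> - b i \<le> snd y"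
    using lower_pos lower_neg proj_i unfolding lower_vertex_def lower_point_def by simp_all
  ultimately have "b i \<le> r * b n" "- b i \<le> - (r * b n)"
    using seg_values by fastforce+
  then have "\<pi> (unitv i) = seg ((1 + r) / 2)"
    using proj_i seg_values by simp
  then have "\<pi> (unitv i) \<in> closed_segment (\<pi> (negv (unitv n))) (\<pi> (unitv n))"
    using seg_in r by simp
  moreover have "\<pi> (negv (unitv n)) \<in> \<pi> ` cross n" "\<pi> (unitv n) \<in> \<pi> ` cross n"
    using ends cross_vertex_in_cross by blast+
  moreover have "\<pi> (unitv i) \<noteq> \<pi> (negv (unitv n))" "\<pi> (unitv i) \<noteq> \<pi> (unitv n)"
    using proj_i proj_ends a_pos[of i] a_less[of i n] i by auto
  ultimately show False
    using face_singleton_on_segment lower_pos unfolding lower_vertex_def by blast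
qed

lemma no_antipodal_pairs_if_coherent:
  assumes "coherent_path n a q"
  shows "antipodal_pairs n q = {}"
proof (rule ccontr)
  assume "antipodal_pairs n q \<noteq> {}"
  then obtain i where i: "1 \<le> i" "i < n" "unitv i \<in> set q" "negv (unitv i) \<in> set q"
    by (auto simp: antipodal_pairs_def)
  obtain b where "set (map (plane_proj n a b) q) = {p. lower_vertex (plane_proj n a b ` cross n) p}"
    using assms unfolding coherent_path_iff by blast
  then show False
    using antipodal_lower_vertices_absurd[of i b] i by auto
qed

lemma coherent_iff_no_antipodal_pairs:
  assumes "monotone_path n a q"
  shows "coherent_path n a q \<longleftrightarrow> antipodal_pairs n q = {}"
  using no_antipodal_pairs_if_coherent coherent_if_no_antipodal_pairs[OF assms] by blast

end

theorem theorem1p1: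
  fixes n :: nat and a :: "nat \<Rightarrow> real"
  assumes "n \<ge> 3"
    and "0 < a 1"
    and "\<forall>i. 1 \<le> i \<and> i < n \<longrightarrow> a i < a (i + 1)"
  shows "(\<forall>p. monotone_path n a p \<longrightarrow>
            (\<exists>q k. coherent_path n a q \<and> k \<le> n - 2 \<and> (p, q) \<in> (flip_rel n a) ^^ k))
       \<and> monotone_path n a (extremal_path n)
       \<and> \<not> (\<exists>q k. coherent_path n a q \<and> k < n - 2 \<and> (extremal_path n, q) \<in> (flip_rel n a) ^^ k)"
proof -
  interpret increasing_weights n a
    using assms by unfold_locales auto
  have "\<exists>q k. coherent_path n a q \<and> k \<le> n - 2 \<and> (p, q) \<in> flip_rel n a ^^ k"
    if p: "monotone_path n a p" for p
  proof -
    obtain q where "monotone_path n a q" "antipodal_pairs n q = {}"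
      "(p, q) \<in> flip_rel n a ^^ card (antipodal_pairs n p)"
      using flips_to_no_antipodal_pairs[OF p] by blast
    then show ?thesis
      using coherent_iff_no_antipodal_pairs card_antipodal_pairs_le[OF p] by blast
  qed
  moreover have "monotone_path n a (extremal_path n)"
    using assms(1) by (intro extremal_path_monotone) simp
  moreover have "n - 2 \<le> k" if "coherent_path n a q" "(extremal_path n, q) \<in> flip_rel n a ^^ k" for q k
    using card_antipodal_pairs_relpow[OF that(2)] no_antipodal_pairs_if_coherent[OF that(1)]
    by (simp add: antipodal_pairs_extremal_path)
  ultimately show ?thesis
    by (meson not_le)
qed

end
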